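(* Let $M$ be a set of $5$ indivisible items. There exist strict monotone preferences $\preceq_1,\preceq_2$ over $2^M$ for two agents and a Pareto optimal allocation $\mathcal S=(S_1,S_2)$ such that for no budget profile $(b_1,b_2)$ with $b_1,b_2>0$ do there exist prices $p$ making $(\mathcal S,p)$ a competitive equilibrium.
   Context: A monotone preference $\preceq_i$ is a complete and transitive weak order over all subsets of $M$ such that $S\preceq_i T$ whenever $S\subseteq T$; it is strict if for any $S\ne T$ either $S\prec_i T$ or $T\prec_i S$ (where $S\prec_i T$ means $S\preceq_i T$ and not $T\preceq_i S$). An allocation is a partition $(S_1,S_2)$ of all items of $M$ between the agents. An allocation $\mathcal S$ is Pareto optimal if for every allocation $\mathcal S'\ne\mathcal S$ there is an agent $i$ with $S'_i\prec_i S_i$. Given item prices $p$ with $p(S)=\sum_{j\in S}p_j$, a bundle $S$ is demanded by agent $i$ with budget $b_i$ if $p(S)\le b_i$ and $p(T)>b_i$ for every $T$ with $S\prec_i T$. $(\mathcal S,p)$ is a competitive equilibrium if $S_i$ is demanded by agent $i$ at prices $p$ for each $i$. *)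

theory Defs
  imports Complex_Main
begin

text \<open>A preference over subsets of the item set M is modelled as a relation
  R :: 'a set => 'a set => bool, where R S T means S is weakly below T.\<close>

definition strictly_pref :: "('a set \<Rightarrow> 'a set \<Rightarrow> bool) \<Rightarrow> 'a set \<Rightarrow> 'a set \<Rightarrow> bool" where
  "strictly_pref R S T \<longleftrightarrow> R S T \<and> \<not> R T S"

definition monotone_pref :: "'a set \<Rightarrow> ('a set \<Rightarrow> 'a set \<Rightarrow> bool) \<Rightarrow> bool" where
  "monotone_pref M R \<longleftrightarrow>
     (\<forall>S T. S \<subseteq> M \<and> T \<subseteq> M \<longrightarrow> R S T \<or> R T S) \<and>
     (\<forall>S T U. S \<subseteq> M \<and> T \<subseteq> M \<and> U \<subseteq> M \<and> R S T \<and> R T U \<longrightarrow> R S U) \<and>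
     (\<forall>S T. S \<subseteq> T \<and> T \<subseteq> M \<longrightarrow> R S T)"

definition strict_pref :: "'a set \<Rightarrow> ('a set \<Rightarrow> 'a set \<Rightarrow> bool) \<Rightarrow> bool" where
  "strict_pref M R \<longleftrightarrow>
     (\<forall>S T. S \<subseteq> M \<and> T \<subseteq> M \<and> S \<noteq> T \<longrightarrow> strictly_pref R S T \<or> strictly_pref R T S)"

definition is_allocation :: "'a set \<Rightarrow> 'a set \<Rightarrow> 'a set \<Rightarrow> bool" where
  "is_allocation M S1 S2 \<longleftrightarrow> S1 \<union> S2 = M \<and> S1 \<inter> S2 = {}"

definition pareto_optimal ::
  "'a set \<Rightarrow> ('a set \<Rightarrow> 'a set \<Rightarrow> bool) \<Rightarrow> ('a set \<Rightarrow> 'a set \<Rightarrow> bool) \<Rightarrow> 'a set \<Rightarrow> 'a set \<Rightarrow> bool" where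
  "pareto_optimal M R1 R2 S1 S2 \<longleftrightarrow>
     (\<forall>T1 T2. is_allocation M T1 T2 \<and> (T1, T2) \<noteq> (S1, S2) \<longrightarrow>
        strictly_pref R1 T1 S1 \<or> strictly_pref R2 T2 S2)"

definition demanded ::
  "'a set \<Rightarrow> ('a set \<Rightarrow> 'a set \<Rightarrow> bool) \<Rightarrow> ('a \<Rightarrow> real) \<Rightarrow> real \<Rightarrow> 'a set \<Rightarrow> bool" where
  "demanded M R p b S \<longleftrightarrow>
     sum p S \<le> b \<and> (\<forall>T. T \<subseteq> M \<and> strictly_pref R S T \<longrightarrow> sum p T > b)"

definition competitive_equilibrium ::
  "'a set \<Rightarrow> ('a set \<Rightarrow> 'a set \<Rightarrow> bool) \<Rightarrow> ('a set \<Rightarrow> 'a set \<Rightarrow> bool) \<Rightarrow> real \<Rightarrow> real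
    \<Rightarrow> 'a set \<Rightarrow> 'a set \<Rightarrow> ('a \<Rightarrow> real) \<Rightarrow> bool" where
  "competitive_equilibrium M R1 R2 b1 b2 S1 S2 p \<longleftrightarrow>
     demanded M R1 p b1 S1 \<and> demanded M R2 p b2 S2"

end

theory Submission
  imports Defs "HOL-Library.Nat_Bijection" "HOL-Library.Product_Lexorder"
begin

text \<open>Take items \<open>a, b, c, d, e\<close> and the allocation \<open>({a,c,e}, {b,d})\<close>. Agent 1 ranks bundles
  containing \<open>{a,b}\<close> or \<open>{c,d}\<close> on top and \<open>{a,c,e}\<close> just below; agent 2 ranks bundles containing
  one of \<open>{b,d,e}\<close>, \<open>{a,c,e}\<close>, \<open>{b,c,d}\<close>, \<open>{a,b,d}\<close> on top and \<open>{b,d}\<close> just below; all other ties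
  are broken arbitrarily. The allocation is Pareto optimal, since any other partition gives one of
  the agents a bottom-level bundle. At equilibrium prices, however, \<open>{a,b}\<close> and \<open>{c,d}\<close> each cost
  more than agent 1's budget, hence more than \<open>p{a,c,e}\<close>, and \<open>{b,d,e}\<close> and \<open>{a,c,e}\<close> each cost more
  than \<open>p{b,d}\<close>; adding these four inequalities yields \<open>2 p(M) > 2 p(M)\<close>.\<close>

lemma card_5_obtain:
  assumes "card M = 5"
  obtains a b c d e where "M = {a, b, c, d, e}" "distinct [a, b, c, d, e]"
  using assms by (simp add: numeral_eq_Suc card_Suc_eq) (metis insertCI)

definition pref_of_utility :: "('a set \<Rightarrow> 'b::linorder) \<Rightarrow> 'a set \<Rightarrow> 'a set \<Rightarrow> bool" where
  "pref_of_utility u S T \<longleftrightarrow> u S \<le> u T"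

lemma strictly_pref_of_utility: "strictly_pref (pref_of_utility u) S T \<longleftrightarrow> u S < u T"
  by (auto simp: strictly_pref_def pref_of_utility_def)

lemma monotone_pref_of_utility:
  assumes "\<And>S T. S \<subseteq> T \<Longrightarrow> T \<subseteq> M \<Longrightarrow> u S \<le> u T"
  shows "monotone_pref M (pref_of_utility u)"
  using assms by (auto simp: monotone_pref_def pref_of_utility_def)

lemma strict_pref_of_utility:
  assumes "inj_on u (Pow M)"
  shows "strict_pref M (pref_of_utility u)"
  unfolding strict_pref_def strictly_pref_of_utility by (metis PowI assms inj_onD neq_iff)

definition refines :: "('a set \<Rightarrow> 'b::order) \<Rightarrow> ('a set \<Rightarrow> 'a set \<Rightarrow> bool) \<Rightarrow> bool" where
  "refines l R \<longleftrightarrow> (\<forall>S T. l S < l T \<longrightarrow> strictly_pref R S T)"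

lemma strict_refinement_exists:
  fixes l :: "'a set \<Rightarrow> 'b::linorder"
  assumes "finite M" and l_mono: "\<And>S T. S \<subseteq> T \<Longrightarrow> T \<subseteq> M \<Longrightarrow> l S \<le> l T"
  obtains R where "monotone_pref M R" "strict_pref M R" "refines l R"
proof -
  obtain h :: "'a \<Rightarrow> nat" where h: "inj_on h M"
    using finite_imp_inj_to_nat_seg[OF \<open>finite M\<close>] by blast
  define u where "u S = (l S, set_encode (h ` S))" for S
  have finite_image: "finite (h ` S)" if "S \<subseteq> M" for S
    using that \<open>finite M\<close> by (blast intro: finite_subset)
  have "monotone_pref M (pref_of_utility u)"
  proof (rule monotone_pref_of_utility)
    fix S T assume "S \<subseteq> T" "T \<subseteq> M"
    then have "set_encode (h ` S) \<le> set_encode (h ` T)"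
      unfolding set_encode_def by (intro sum_mono2 finite_image) auto
    then show "u S \<le> u T"
      using l_mono[OF \<open>S \<subseteq> T\<close> \<open>T \<subseteq> M\<close>] by (auto simp: u_def le_less)
  qed
  moreover have "strict_pref M (pref_of_utility u)"
  proof (intro strict_pref_of_utility inj_onI)
    fix S T assume "S \<in> Pow M" "T \<in> Pow M" "u S = u T"
    then have "h ` S = h ` T"
      by (simp add: u_def set_encode_eq finite_image)
    then show "S = T"
      using \<open>S \<in> Pow M\<close> \<open>T \<in> Pow M\<close> h by (simp add: inj_on_image_eq_iff)
  qed
  moreover have "refines l (pref_of_utility u)"
    by (simp add: refines_def strictly_pref_of_utility u_def)
  ultimately show ?thesis
    using that by blast
qed

locale five_items =
  fixes a b c d e :: 'a
  assumes distinct: "distinct [a, b, c, d, e]"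
begin

abbreviation items :: "'a set" where
  "items \<equiv> {a, b, c, d, e}"

definition level1 :: "'a set \<Rightarrow> nat" where
  "level1 S = (if {a, b} \<subseteq> S \<or> {c, d} \<subseteq> S then 2 else if {a, c, e} \<subseteq> S then 1 else 0)"

definition level2 :: "'a set \<Rightarrow> nat" where
  "level2 S =
    (if {b, d, e} \<subseteq> S \<or> {a, c, e} \<subseteq> S \<or> {b, c, d} \<subseteq> S \<or> {a, b, d} \<subseteq> S then 2
     else if {b, d} \<subseteq> S then 1 else 0)"

lemma level1_mono: "S \<subseteq> T \<Longrightarrow> level1 S \<le> level1 T"
  unfolding level1_def by auto

lemma level2_mono: "S \<subseteq> T \<Longrightarrow> level2 S \<le> level2 T"
  unfolding level2_def by auto

lemma allocation_ace_bd: "is_allocation items {a, c, e} {b, d}"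
  using distinct by (auto simp: is_allocation_def)

lemma level1_ace: "level1 {a, c, e} = 1"
  using distinct by (auto simp: level1_def)

lemma level2_bd: "level2 {b, d} = 1"
  using distinct by (auto simp: level2_def)

lemma pareto_optimal_ace_bd:
  assumes "refines level1 R1" "refines level2 R2"
  shows "pareto_optimal items R1 R2 {a, c, e} {b, d}"
  unfolding pareto_optimal_def
proof (intro allI impI)
  fix T1 T2 assume alloc: "is_allocation items T1 T2 \<and> (T1, T2) \<noteq> ({a, c, e}, {b, d})"
  then have T2: "T2 = items - T1" and "T1 \<subseteq> items"
    by (auto simp: is_allocation_def)
  have "level1 T1 = 0 \<or> level2 T2 = 0"
  proof (cases "{a, b} \<subseteq> T1 \<or> {c, d} \<subseteq> T1")
    case True
    then show ?thesis
      using T2 by (auto simp: level2_def)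
  next
    case False
    have "T1 \<noteq> {a, c, e}"
      using alloc T2 distinct by auto
    then have "\<not> {a, c, e} \<subseteq> T1"
      using False \<open>T1 \<subseteq> items\<close> by auto
    then have "level1 T1 = 0"
      using False by (simp add: level1_def)
    then show ?thesis ..
  qed
  then have "level1 T1 < level1 {a, c, e} \<or> level2 T2 < level2 {b, d}"
    by (auto simp: level1_ace level2_bd)
  then show "strictly_pref R1 T1 {a, c, e} \<or> strictly_pref R2 T2 {b, d}"
    using assms by (auto simp: refines_def)
qed

lemma no_competitive_equilibrium_ace_bd:
  fixes p :: "'a \<Rightarrow> real"
  assumes "refines level1 R1" "refines level2 R2"
  shows "\<not> competitive_equilibrium items R1 R2 b1 b2 {a, c, e} {b, d} p"
proof
  assume "competitive_equilibrium items R1 R2 b1 b2 {a, c, e} {b, d} p"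
  then have affordable: "sum p {a, c, e} \<le> b1" "sum p {b, d} \<le> b2"
    and too_expensive1: "\<And>T. T \<subseteq> items \<Longrightarrow> 1 < level1 T \<Longrightarrow> b1 < sum p T"
    and too_expensive2: "\<And>T. T \<subseteq> items \<Longrightarrow> 1 < level2 T \<Longrightarrow> b2 < sum p T"
    using assms by (auto simp: competitive_equilibrium_def demanded_def refines_def
        level1_ace level2_bd)
  have "b1 < sum p {a, b}" "b1 < sum p {c, d}"
    by (rule too_expensive1; simp add: level1_def)+
  moreover have "b2 < sum p {b, d, e}" "b2 < sum p {a, c, e}"
    by (rule too_expensive2; simp add: level2_def)+
  ultimately show False
    using affordable distinct by simp
qed

end

theorem mainTheorem4:
  fixes M :: "'a set"
  assumes "finite M" and "card M = 5"
  shows "\<exists>R1 R2 S1 S2.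
           monotone_pref M R1 \<and> strict_pref M R1 \<and>
           monotone_pref M R2 \<and> strict_pref M R2 \<and>
           is_allocation M S1 S2 \<and> pareto_optimal M R1 R2 S1 S2 \<and>
           \<not> (\<exists>b1 b2 (p :: 'a \<Rightarrow> real). b1 > 0 \<and> b2 > 0 \<and>
                 competitive_equilibrium M R1 R2 b1 b2 S1 S2 p)"
proof -
  obtain a b c d e where M: "M = {a, b, c, d, e}" and "distinct [a, b, c, d, e]"
    using card_5_obtain[OF \<open>card M = 5\<close>] .
  then interpret five_items a b c d e
    by unfold_locales
  obtain R1 where "monotone_pref M R1" "strict_pref M R1" "refines level1 R1"
    using strict_refinement_exists[OF \<open>finite M\<close> level1_mono] .
  moreover obtain R2 where "monotone_pref M R2" "strict_pref M R2" "refines level2 R2"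
    using strict_refinement_exists[OF \<open>finite M\<close> level2_mono] .
  ultimately show ?thesis
    unfolding M using allocation_ace_bd pareto_optimal_ace_bd no_competitive_equilibrium_ace_bd
    by blast
qed

end
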